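(* Let $m\ge 3$ be an integer, $n=2^m-1$, and $\phi\in\mathbb{R}$. Take a logical state of the code $\mathrm{QRM}(1,m)$, apply $R_z(-\phi)^{\otimes n}$ (transversal $R_z(-\phi)$), and then measure successively the $m$ $X$-type stabilizer generators $S^X_1,\dots,S^X_m$, where a measurement "fails" (rejects) if its outcome is $-1$. Then the probability that at least one of these $m$ syndrome measurements fails is at most $1-\left(1-\frac{1}{2^{m-1}}\right)^{m}$.
   Context: $Z=|0\rangle\langle0|-|1\rangle\langle1|$ and $R_z(\theta)=\exp(-i\theta Z/2)$. Classical first-order Reed–Muller code $\mathrm{RM}(1,m)$: binary code of length $2^m$ whose codewords are the truth tables of affine Boolean functions $a_0+a_1x_1+\dots+a_mx_m$ on $\{0,1\}^m$. The shortened code $\overline{\mathrm{RM}}(1,m)$ keeps the codewords of $\mathrm{RM}(1,m)$ whose first coordinate (value at $x=0$) is $0$ and deletes that coordinate (length $2^m-1$). The punctured code $\mathrm{RM}^*(1,m)$ is generated by $\overline{\mathrm{RM}}(1,m)$ together with the all-ones vector $\mathbf{1}$. The quantum Reed–Muller code $\mathrm{QRM}(1,m)$ is the CSS code on $2^m-1$ qubits with logical basis states $|x_L\rangle\propto\sum_{y\in\overline{\mathrm{RM}}(1,m)}|y+x\mathbf{1}\rangle$, $x\in\{0,1\}$. Its $X$-type stabilizer generators are $S^X_i=\bigotimes_k X^{(g_i)_k}$ for a basis $g_1,\dots,g_m$ of $\overline{\mathrm{RM}}(1,m)$; its $Z$-type stabilizers are $Z^h$ for rows $h$ of a parity-check matrix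 of $\mathrm{RM}^*(1,m)$. *)

theory Defs
  imports Complex_Main
begin

text \<open>Qubits of QRM(1,m) are indexed by k in {1..<2^m}; qubit k corresponds to the
nonzero point x in {0,1}^m whose i-th coordinate is bit i of k (the deleted
first coordinate is x = 0, i.e. k = 0).  A computational basis vector |y> of
the n = 2^m - 1 qubits is represented by the set y of qubits that are 1.
A state is a function from basis labels (nat set) to complex amplitudes,
supported on Pow (qubits m).\<close>

definition qubits :: "nat \<Rightarrow> nat set" where
  "qubits m = {1..<2^m}"

definition symdiff :: "nat set \<Rightarrow> nat set \<Rightarrow> nat set" where
  "symdiff A B = (A - B) \<union> (B - A)"

text \<open>Shortened first-order Reed-Muller code: truth tables of the affine functions
vanishing at 0, i.e. the linear functions x \<mapsto> sum_{i in a} x_i (a \<subseteq> {0..<m}),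
with the coordinate x = 0 deleted.\<close>
definition shortRM :: "nat \<Rightarrow> nat set set" where
  "shortRM m = {{k \<in> qubits m. odd (card {i \<in> a. bit k i})} | a. a \<subseteq> {0..<m}}"

text \<open>GF(2)-linear combination (symmetric difference) of g_i, i in A.\<close>
definition gsum :: "(nat \<Rightarrow> nat set) \<Rightarrow> nat set \<Rightarrow> nat set" where
  "gsum g A = {k. odd (card {i \<in> A. k \<in> g i})}"

definition is_basis :: "nat \<Rightarrow> (nat \<Rightarrow> nat set) \<Rightarrow> bool" where
  "is_basis m g \<longleftrightarrow> (\<forall>i<m. g i \<in> shortRM m) \<and> bij_betw (gsum g) (Pow {0..<m}) (shortRM m)"

type_synonym state = "nat set \<Rightarrow> complex"

definition ketL :: "nat \<Rightarrow> bool \<Rightarrow> state" where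
  "ketL m x = (\<lambda>y. if y \<subseteq> qubits m \<and> symdiff y (if x then qubits m else {}) \<in> shortRM m
                   then complex_of_real (1 / sqrt (2 ^ m)) else 0)"

definition logical_state :: "nat \<Rightarrow> complex \<Rightarrow> complex \<Rightarrow> state" where
  "logical_state m \<alpha> \<beta> = (\<lambda>y. \<alpha> * ketL m False y + \<beta> * ketL m True y)"

text \<open>R_z(theta) = exp(-i theta Z/2): diagonal entry on |b> (b = True means |1>).\<close>
definition Rz_diag :: "real \<Rightarrow> bool \<Rightarrow> complex" where
  "Rz_diag \<theta> b = (if b then exp (\<i> * complex_of_real (\<theta> / 2)) else exp (- \<i> * complex_of_real (\<theta> / 2)))"

definition transversal_Rz :: "nat \<Rightarrow> real \<Rightarrow> state \<Rightarrow> state" where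
  "transversal_Rz m \<theta> \<psi> = (\<lambda>y. (\<Prod>k\<in>qubits m. Rz_diag \<theta> (k \<in> y)) * \<psi> y)"

definition Xop :: "nat set \<Rightarrow> state \<Rightarrow> state" where
  "Xop g \<psi> = (\<lambda>y. \<psi> (symdiff y g))"

text \<open>Projector for measuring X^g with outcome (-1)^b: (I + (-1)^b X^g)/2
  (b = True is outcome -1, i.e. failure).\<close>
definition proj :: "nat set \<Rightarrow> bool \<Rightarrow> state \<Rightarrow> state" where
  "proj g b \<psi> = (\<lambda>y. (\<psi> y + (if b then -1 else 1) * Xop g \<psi> y) / 2)"

fun seq_proj :: "(nat \<Rightarrow> nat set) \<Rightarrow> nat \<Rightarrow> bool list \<Rightarrow> state \<Rightarrow> state" where
  "seq_proj g i [] \<psi> = \<psi>"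
| "seq_proj g i (b # bs) \<psi> = seq_proj g (Suc i) bs (proj (g i) b \<psi>)"

definition sqnorm :: "nat \<Rightarrow> state \<Rightarrow> real" where
  "sqnorm m \<psi> = (\<Sum>y\<in>Pow (qubits m). (cmod (\<psi> y))\<^sup>2)"

definition outcome_prob :: "nat \<Rightarrow> (nat \<Rightarrow> nat set) \<Rightarrow> state \<Rightarrow> bool list \<Rightarrow> real" where
  "outcome_prob m g \<psi> bs = sqnorm m (seq_proj g 0 bs \<psi>)"

definition fail_prob :: "nat \<Rightarrow> (nat \<Rightarrow> nat set) \<Rightarrow> state \<Rightarrow> real" where
  "fail_prob m g \<psi> = (\<Sum>bs\<in>{bs. length bs = m \<and> True \<in> set bs}. outcome_prob m g \<psi> bs)"

end

(*
  Passing all m measurements applies the product of the projectors (1 + X^(g_i))/2, i.e. the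
  average of X^c over the shortened code C; since the outcome probabilities sum to 1, the failure
  probability is 1 minus the squared norm of this average applied to the rotated state.

  The logical state is supported on the two cosets C and C + 1 with amplitudes alpha/sqrt(2^m) and
  beta/sqrt(2^m), and transversal R_z multiplies the amplitude at y by a phase depending only on
  the weight of y.  All nonzero codewords have weight 2^(m-1), so on each coset the 2^m phases
  summed by the average agree except for one, and the averaged amplitude is at least
  (2^m - 2)/2^m times the original one.  Hence the passing probability is at least
  (1 - 1/2^(m-1))^2, which dominates (1 - 1/2^(m-1))^m as soon as m >= 2.
*)

theory Submission
  imports Defs
begin

lemma symdiff_iff [simp]: "x \<in> symdiff A B \<longleftrightarrow> (x \<in> A) \<noteq> (x \<in> B)"
  by (auto simp: symdiff_def)

lemma symdiff_empty_right [simp]: "symdiff A {} = A"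
  and symdiff_eq_empty_iff [simp]: "symdiff A B = {} \<longleftrightarrow> A = B"
  and symdiff_cancel_right [simp]: "symdiff (symdiff A B) B = A"
  and symdiff_cancel_left [simp]: "symdiff A (symdiff A B) = B"
  by (auto simp: symdiff_def)

lemma symdiff_right_eq_iff [simp]: "symdiff A C = symdiff B C \<longleftrightarrow> A = B"
  by (metis symdiff_cancel_right)

lemma symdiff_commute: "symdiff A B = symdiff B A"
  and symdiff_assoc: "symdiff (symdiff A B) C = symdiff A (symdiff B C)"
  by (auto simp: symdiff_def)

lemma odd_card_symdiff:
  assumes "finite A" "finite B"
  shows "odd (card (symdiff A B)) \<longleftrightarrow> odd (card A) \<noteq> odd (card B)"
proof -
  have "card (symdiff A B) = card (A - B) + card (B - A)"
    unfolding symdiff_def using assms by (intro card_Un_disjoint) auto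
  moreover have "card A = card (A - B) + card (A \<inter> B)" "card B = card (B - A) + card (A \<inter> B)"
    using assms by (metis Int_commute card_Int_Diff add.commute)+
  ultimately show ?thesis by auto
qed

lemma sum_symdiff_Pow:
  assumes "B \<subseteq> X"
  shows "(\<Sum>y\<in>Pow X. f (symdiff y B)) = (\<Sum>y\<in>Pow X. f y)"
  by (rule sum.reindex_bij_witness[where i="\<lambda>y. symdiff y B" and j="\<lambda>y. symdiff y B"])
     (use assms in \<open>auto simp: symdiff_def\<close>)

lemma sum_symdiff_closed:
  assumes "\<And>c d. c \<in> C \<Longrightarrow> d \<in> C \<Longrightarrow> symdiff c d \<in> C" "x \<in> C"
  shows "(\<Sum>c\<in>C. f (symdiff x c)) = (\<Sum>c\<in>C. f c)"
  by (rule sum.reindex_bij_witness[where i="symdiff x" and j="symdiff x"]) (simp_all add: assms)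

lemma gsum_empty [simp]: "gsum g {} = {}"
  by (simp add: gsum_def)

lemma gsum_symdiff:
  assumes "finite A" "finite B"
  shows "gsum g (symdiff A B) = symdiff (gsum g A) (gsum g B)"
proof (rule set_eqI)
  fix k
  have "{i \<in> symdiff A B. k \<in> g i} = symdiff {i \<in> A. k \<in> g i} {i \<in> B. k \<in> g i}"
    by auto
  then show "k \<in> gsum g (symdiff A B) \<longleftrightarrow> k \<in> symdiff (gsum g A) (gsum g B)"
    using assms by (simp add: gsum_def odd_card_symdiff)
qed

lemma gsum_insert:
  assumes "finite A" "i \<notin> A"
  shows "gsum g (insert i A) = symdiff (gsum g A) (g i)"
proof -
  have "{j. j = i \<and> k \<in> g j} = (if k \<in> g i then {i} else {})" for k
    by auto
  then have "gsum g {i} = g i" by (auto simp: gsum_def)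
  moreover have "insert i A = symdiff A {i}" using assms(2) by auto
  ultimately show ?thesis using assms(1) by (simp add: gsum_symdiff)
qed

lemma card_odd_parity_lessThan:
  assumes "a \<subseteq> {0..<m}" "j \<in> a"
  shows "card {k \<in> {..<(2::nat) ^ m}. odd (card {i \<in> a. bit k i})} = 2 ^ (m - 1)"
proof -
  define flip where "flip k = xor k ((2::nat) ^ j)" for k
  \<comment> \<open>flipping bit \<open>j\<close> is an involution of \<open>{..<2^m}\<close> that changes the parity\<close>
  define Odd where "Odd = {k \<in> {..<(2::nat) ^ m}. odd (card {i \<in> a. bit k i})}"
  define Even where "Even = {k \<in> {..<(2::nat) ^ m}. even (card {i \<in> a. bit k i})}"
  have "j < m" using assms by auto
  have flip_flip: "flip (flip k) = k" for k
    unfolding flip_def by (rule bit_eqI) (auto simp: bit_xor_iff)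
  have flip_less: "flip k < 2 ^ m" if "k < 2 ^ m" for k
  proof -
    have "take_bit m (flip k) = flip k"
      unfolding flip_def take_bit_xor using that \<open>j < m\<close> by (simp add: take_bit_nat_eq_self)
    then show ?thesis by (simp add: take_bit_nat_eq_self_iff)
  qed
  have even_flip: "even (card {i \<in> a. bit (flip k) i}) \<longleftrightarrow> odd (card {i \<in> a. bit k i})" for k
  proof -
    have "{i \<in> a. bit (flip k) i} = symdiff {i \<in> a. bit k i} {j}"
      using assms(2) by (auto simp: flip_def bit_xor_iff bit_exp_iff)
    moreover have "finite a" using assms(1) finite_subset by blast
    ultimately show ?thesis using odd_card_symdiff[of "{i \<in> a. bit k i}" "{j}"] by auto
  qed
  have "bij_betw flip Even Odd"
    by (rule bij_betw_byWitness[where f'=flip]) (auto simp: Even_def Odd_def flip_flip flip_less even_flip)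
  then have "card Even = card Odd" by (rule bij_betw_same_card)
  moreover have "card Even + card Odd = 2 ^ m"
  proof -
    have "Even \<union> Odd = {..<2 ^ m}" "Even \<inter> Odd = {}" by (auto simp: Even_def Odd_def)
    then show ?thesis using card_Un_disjoint[of Even Odd] by (simp add: Even_def Odd_def)
  qed
  moreover have "(2::nat) ^ m = 2 * 2 ^ (m - 1)" using \<open>j < m\<close> by (cases m) auto
  ultimately show ?thesis unfolding Odd_def by simp
qed

definition coord :: "nat \<Rightarrow> nat \<Rightarrow> nat set" where
  "coord m i = {k \<in> qubits m. bit k i}"

lemma finite_qubits [simp]: "finite (qubits m)"
  by (simp add: qubits_def)

lemma card_qubits: "card (qubits m) = 2 ^ m - 1"
  by (simp add: qubits_def)

lemma gsum_coord: "gsum (coord m) a = {k \<in> qubits m. odd (card {i \<in> a. bit k i})}"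
proof (rule set_eqI)
  fix k
  show "k \<in> gsum (coord m) a \<longleftrightarrow> k \<in> {k \<in> qubits m. odd (card {i \<in> a. bit k i})}"
    by (cases "k \<in> qubits m") (simp_all add: gsum_def coord_def)
qed

lemma shortRM_eq_gsum_coord_image: "shortRM m = gsum (coord m) ` Pow {0..<m}"
  by (auto simp: shortRM_def gsum_coord)

lemma card_gsum_coord:
  assumes "a \<subseteq> {0..<m}" "a \<noteq> {}"
  shows "card (gsum (coord m) a) = 2 ^ (m - 1)"
proof -
  obtain j where "j \<in> a" using assms(2) by blast
  have "gsum (coord m) a = {k \<in> {..<2 ^ m}. odd (card {i \<in> a. bit k i})}"
    unfolding gsum_coord qubits_def by (auto simp: Suc_le_eq intro!: Nat.gr0I)
  then show ?thesis using card_odd_parity_lessThan[OF assms(1) \<open>j \<in> a\<close>] by simp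
qed

lemma inj_on_gsum_coord: "inj_on (gsum (coord m)) (Pow {0..<m})"
proof (rule inj_onI)
  fix a b assume a: "a \<in> Pow {0..<m}" and b: "b \<in> Pow {0..<m}"
    and eq: "gsum (coord m) a = gsum (coord m) b"
  have "gsum (coord m) (symdiff a b) = {}"
    using a b eq by (simp add: gsum_symdiff finite_subset)
  moreover have "symdiff a b \<subseteq> {0..<m}" using a b unfolding symdiff_def by blast
  ultimately have "symdiff a b = {}"
    using card_gsum_coord[of "symdiff a b" m] by fastforce
  then show "a = b" by simp
qed

lemma card_shortRM: "card (shortRM m) = 2 ^ m"
  by (simp add: shortRM_eq_gsum_coord_image card_image[OF inj_on_gsum_coord] card_Pow)

lemma finite_shortRM [simp]: "finite (shortRM m)"
  by (simp add: shortRM_eq_gsum_coord_image)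

lemma card_shortRM_nonempty:
  assumes "c \<in> shortRM m" "c \<noteq> {}"
  shows "card c = 2 ^ (m - 1)"
proof -
  obtain a where "a \<subseteq> {0..<m}" "c = gsum (coord m) a"
    using assms(1) unfolding shortRM_eq_gsum_coord_image by blast
  moreover have "a \<noteq> {}" using assms(2) calculation(2) by auto
  ultimately show ?thesis by (simp add: card_gsum_coord)
qed

lemma symdiff_in_shortRM:
  assumes "c \<in> shortRM m" "d \<in> shortRM m"
  shows "symdiff c d \<in> shortRM m"
proof -
  obtain a b where ab: "a \<subseteq> {0..<m}" "b \<subseteq> {0..<m}"
    and "c = gsum (coord m) a" "d = gsum (coord m) b"
    using assms unfolding shortRM_eq_gsum_coord_image by blast
  then have "symdiff c d = gsum (coord m) (symdiff a b)"
    by (simp add: gsum_symdiff finite_subset)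
  moreover have "symdiff a b \<subseteq> {0..<m}" using ab unfolding symdiff_def by blast
  ultimately show ?thesis unfolding shortRM_eq_gsum_coord_image by blast
qed

lemma symdiff_in_shortRM_iff: "c \<in> shortRM m \<Longrightarrow> symdiff c d \<in> shortRM m \<longleftrightarrow> d \<in> shortRM m"
  by (metis symdiff_cancel_left symdiff_in_shortRM)

lemma empty_in_shortRM: "{} \<in> shortRM m"
  unfolding shortRM_eq_gsum_coord_image by (intro image_eqI[where x="{}"]) auto

lemma shortRM_subset_qubits: "c \<in> shortRM m \<Longrightarrow> c \<subseteq> qubits m"
  by (auto simp: shortRM_def)

lemma qubits_notin_shortRM:
  assumes "m \<ge> 2"
  shows "qubits m \<notin> shortRM m"
proof
  assume Q: "qubits m \<in> shortRM m"
  have "1 < (2::nat) ^ m" using assms by (intro one_less_power) auto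
  then have "qubits m \<noteq> {}" by (auto simp: qubits_def)
  then have "2 ^ m - 1 = (2::nat) ^ (m - 1)"
    using card_shortRM_nonempty[OF Q] by (simp add: card_qubits)
  moreover have "(2::nat) ^ m = 2 * 2 ^ (m - 1)" "(2::nat) \<le> 2 ^ (m - 1)"
    using assms by (cases m; simp add: self_le_power)+
  ultimately show False by linarith
qed

definition ones :: "nat \<Rightarrow> bool \<Rightarrow> nat set" where
  "ones m x = (if x then qubits m else {})"

lemma symdiff_ones_ones: "symdiff (ones m s) (ones m t) = ones m (s \<noteq> t)"
  by (auto simp: ones_def)

lemma ones_in_shortRM_iff: "m \<ge> 2 \<Longrightarrow> ones m t \<in> shortRM m \<longleftrightarrow> \<not> t"
  by (simp add: ones_def qubits_notin_shortRM empty_in_shortRM)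

lemma symdiff_ones_subset: "c \<subseteq> qubits m \<Longrightarrow> symdiff c (ones m t) \<subseteq> qubits m"
  by (auto simp: ones_def)

lemma sum_lists_length_Suc:
  fixes f :: "'a::finite list \<Rightarrow> 'b::comm_monoid_add"
  shows "(\<Sum>xs | length xs = Suc n. f xs) = (\<Sum>x\<in>UNIV. \<Sum>xs | length xs = n. f (x # xs))"
proof -
  have inj: "inj_on (\<lambda>(x, xs). x # xs) (UNIV \<times> {xs :: 'a list. length xs = n})"
    by (auto simp: inj_on_def)
  have lists: "{xs. length xs = Suc n} = (\<lambda>(x, xs). x # xs) ` (UNIV \<times> {xs. length xs = n})"
    by (auto simp: length_Suc_conv)
  show ?thesis
    unfolding lists sum.reindex[OF inj] sum.cartesian_product by (simp add: case_prod_unfold)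
qed

lemma sqnorm_proj_add:
  assumes "g \<subseteq> qubits m"
  shows "sqnorm m (proj g False \<psi>) + sqnorm m (proj g True \<psi>) = sqnorm m \<psi>"
proof -
  have parallelogram: "(cmod (a + b) / 2)\<^sup>2 + (cmod (a - b) / 2)\<^sup>2 = ((cmod a)\<^sup>2 + (cmod b)\<^sup>2) / 2"
    for a b :: complex
    by (simp only: power_divide cmod_power2) (simp add: power2_eq_square field_simps)
  have "sqnorm m (proj g False \<psi>) + sqnorm m (proj g True \<psi>)
      = (\<Sum>y\<in>Pow (qubits m). ((cmod (\<psi> y))\<^sup>2 + (cmod (\<psi> (symdiff y g)))\<^sup>2) / 2)"
    unfolding sqnorm_def proj_def Xop_def sum.distrib[symmetric] by (simp add: parallelogram)
  also have "\<dots> = sqnorm m \<psi>"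
    unfolding sqnorm_def sum_divide_distrib[symmetric] sum.distrib
      sum_symdiff_Pow[OF assms, of "\<lambda>y. (cmod (\<psi> y))\<^sup>2"] by simp
  finally show ?thesis .
qed

lemma sum_sqnorm_seq_proj:
  assumes "\<And>j. i \<le> j \<Longrightarrow> j < i + n \<Longrightarrow> g j \<subseteq> qubits m"
  shows "(\<Sum>bs | length bs = n. sqnorm m (seq_proj g i bs \<psi>)) = sqnorm m \<psi>"
  using assms
proof (induction n arbitrary: i \<psi>)
  case 0
  then show ?case by simp
next
  case (Suc n)
  have "(\<Sum>bs | length bs = n. sqnorm m (seq_proj g (Suc i) bs \<phi>)) = sqnorm m \<phi>" for \<phi>
    using Suc.prems by (intro Suc.IH) auto
  then have "(\<Sum>bs | length bs = Suc n. sqnorm m (seq_proj g i bs \<psi>))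
      = sqnorm m (proj (g i) False \<psi>) + sqnorm m (proj (g i) True \<psi>)"
    by (simp add: sum_lists_length_Suc UNIV_bool)
  also have "\<dots> = sqnorm m \<psi>"
    using Suc.prems by (intro sqnorm_proj_add) auto
  finally show ?case .
qed

lemma fail_prob_eq:
  assumes "\<And>j. j < m \<Longrightarrow> g j \<subseteq> qubits m"
  shows "fail_prob m g \<psi> = sqnorm m \<psi> - sqnorm m (seq_proj g 0 (replicate m False) \<psi>)"
proof -
  have "bs = replicate m False" if "length bs = m" "True \<notin> set bs" for bs
    using that by (metis (full_types) replicate_length_same)
  then have "{bs. length bs = m} = insert (replicate m False) {bs. length bs = m \<and> True \<in> set bs}"
    by auto
  moreover have "finite {bs :: bool list. length bs = m \<and> True \<in> set bs}"
    using finite_list_length[of m] by (rule rev_finite_subset) auto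
  ultimately have "sqnorm m \<psi> = sqnorm m (seq_proj g 0 (replicate m False) \<psi>) + fail_prob m g \<psi>"
    using sum_sqnorm_seq_proj[of 0 m g m \<psi>] assms
    by (simp add: fail_prob_def outcome_prob_def)
  then show ?thesis by simp
qed

lemma seq_proj_replicate_False:
  "seq_proj g i (replicate n False) \<psi> y = (\<Sum>A\<in>Pow {i..<i + n}. \<psi> (symdiff y (gsum g A))) / 2 ^ n"
proof (induction n arbitrary: i \<psi> y)
  case 0
  then show ?case by simp
next
  case (Suc n)
  let ?P = "Pow {Suc i..<Suc i + n}"
  have "{i..<i + Suc n} = insert i {Suc i..<Suc i + n}" by auto
  then have "Pow {i..<i + Suc n} = ?P \<union> insert i ` ?P" "?P \<inter> insert i ` ?P = {}"
    by (auto simp: Pow_insert)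
  moreover have "inj_on (insert i) ?P"
  proof (rule inj_onI)
    fix A B assume "A \<in> ?P" "B \<in> ?P" "insert i A = insert i B"
    moreover from \<open>A \<in> ?P\<close> \<open>B \<in> ?P\<close> have "i \<notin> A" "i \<notin> B" by auto
    ultimately show "A = B" by (simp add: insert_ident)
  qed
  moreover have "gsum g (insert i A) = symdiff (gsum g A) (g i)" if "A \<in> ?P" for A
    using that by (intro gsum_insert) (auto intro: finite_subset)
  ultimately have "(\<Sum>A\<in>Pow {i..<i + Suc n}. \<psi> (symdiff y (gsum g A)))
      = (\<Sum>A\<in>?P. \<psi> (symdiff y (gsum g A)) + \<psi> (symdiff (symdiff y (gsum g A)) (g i)))"
    by (simp add: sum.union_disjoint sum.reindex sum.distrib symdiff_assoc)
  then show ?case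
    by (simp add: Suc.IH proj_def Xop_def sum_divide_distrib add_divide_distrib)
qed

definition pass_proj :: "nat \<Rightarrow> state \<Rightarrow> state" where
  "pass_proj m \<psi> = (\<lambda>y. (\<Sum>c\<in>shortRM m. Xop c \<psi> y) / 2 ^ m)"

lemma seq_proj_all_pass:
  assumes "is_basis m g"
  shows "seq_proj g 0 (replicate m False) \<psi> = pass_proj m \<psi>"
proof -
  have "inj_on (gsum g) (Pow {0..<m})" "shortRM m = gsum g ` Pow {0..<m}"
    using assms by (simp_all add: is_basis_def bij_betw_def)
  then show ?thesis
    by (simp add: fun_eq_iff pass_proj_def Xop_def seq_proj_replicate_False sum.reindex)
qed

definition rz_phase :: "nat \<Rightarrow> real \<Rightarrow> nat set \<Rightarrow> complex" where
  "rz_phase m \<theta> y = (\<Prod>k\<in>qubits m. Rz_diag \<theta> (k \<in> y))"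

lemma norm_Rz_diag [simp]: "cmod (Rz_diag \<theta> b) = 1"
  by (simp add: Rz_diag_def norm_exp_eq_Re)

lemma norm_rz_phase [simp]: "cmod (rz_phase m \<theta> y) = 1"
  by (simp add: rz_phase_def prod_norm[symmetric])

lemma transversal_Rz_apply: "transversal_Rz m \<theta> \<psi> y = rz_phase m \<theta> y * \<psi> y"
  by (simp add: transversal_Rz_def rz_phase_def)

lemma sqnorm_transversal_Rz [simp]: "sqnorm m (transversal_Rz m \<theta> \<psi>) = sqnorm m \<psi>"
  by (simp add: sqnorm_def transversal_Rz_apply norm_mult)

lemma rz_phase_eq_power_card:
  assumes "y \<subseteq> qubits m"
  shows "rz_phase m \<theta> y = Rz_diag \<theta> True ^ card y * Rz_diag \<theta> False ^ (card (qubits m) - card y)"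
proof -
  have "rz_phase m \<theta> y = (\<Prod>k\<in>qubits m - y. Rz_diag \<theta> (k \<in> y)) * (\<Prod>k\<in>y. Rz_diag \<theta> (k \<in> y))"
    unfolding rz_phase_def using assms by (simp add: prod.subset_diff)
  also have "\<dots> = (\<Prod>k\<in>qubits m - y. Rz_diag \<theta> False) * (\<Prod>k\<in>y. Rz_diag \<theta> True)"
    by (intro arg_cong2[where f="(*)"] prod.cong) auto
  finally show ?thesis
    using assms by (simp add: card_Diff_subset finite_subset mult.commute)
qed

lemma rz_phase_symdiff_ones_shortRM:
  assumes "c \<in> shortRM m" "d \<in> shortRM m" "c \<noteq> {}" "d \<noteq> {}"
  shows "rz_phase m \<theta> (symdiff c (ones m t)) = rz_phase m \<theta> (symdiff d (ones m t))"
proof -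
  have "card (symdiff c (ones m t)) = card (symdiff d (ones m t))"
  proof (cases t)
    case True
    have "symdiff e (qubits m) = qubits m - e" if "e \<in> shortRM m" for e
      using shortRM_subset_qubits[OF that] by auto
    with True assms show ?thesis
      by (simp add: ones_def card_Diff_subset shortRM_subset_qubits card_shortRM_nonempty
          finite_subset[OF shortRM_subset_qubits])
  qed (use card_shortRM_nonempty[OF assms(1,3)] card_shortRM_nonempty[OF assms(2,4)] in
      \<open>simp add: ones_def\<close>)
  then show ?thesis
    using assms by (simp add: rz_phase_eq_power_card symdiff_ones_subset shortRM_subset_qubits)
qed

lemma norm_sum_ge_card_minus_two:
  fixes f :: "'a \<Rightarrow> 'b::real_normed_vector"
  assumes "finite C" "z \<in> C" "\<And>c d. c \<in> C - {z} \<Longrightarrow> d \<in> C - {z} \<Longrightarrow> f c = f d"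
    and "\<And>c. c \<in> C \<Longrightarrow> norm (f c) = 1"
  shows "real (card C) - 2 \<le> norm (\<Sum>c\<in>C. f c)"
proof (cases "C - {z} = {}")
  case True
  then have "C = {z}" using assms(2) by blast
  then show ?thesis using assms(4)[of z] by simp
next
  case False
  then obtain d where d: "d \<in> C - {z}" by blast
  have "(\<Sum>c\<in>C. f c) = f z + (\<Sum>c\<in>C - {z}. f c)"
    using assms(1,2) by (rule sum.remove)
  also have "\<dots> = f z + (\<Sum>c\<in>C - {z}. f d)"
    using assms(3)[OF _ d] by (metis (no_types, lifting) sum.cong)
  also have "\<dots> = f z + real (card C - 1) *\<^sub>R f d"
    using assms(1,2) by (simp add: sum_constant_scaleR)
  finally have "norm (real (card C - 1) *\<^sub>R f d) - norm (f z) \<le> norm (\<Sum>c\<in>C. f c)"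
    by (metis add.commute norm_diff_ineq)
  moreover have "norm (f z) = 1" "norm (f d) = 1" using assms(2,4) d by auto
  moreover have "card C \<ge> 1" using assms(1,2) by (metis One_nat_def Suc_leI card_gt_0_iff empty_iff)
  ultimately show ?thesis by (simp add: of_nat_diff)
qed

lemma norm_sum_rz_phase_shortRM_ge:
  "real (card (shortRM m)) - 2 \<le> cmod (\<Sum>c\<in>shortRM m. rz_phase m \<theta> (symdiff c (ones m t)))"
  by (rule norm_sum_ge_card_minus_two[where z="{}"])
     (simp_all add: empty_in_shortRM rz_phase_symdiff_ones_shortRM)

lemma ketL_symdiff_ones:
  assumes "m \<ge> 2" "c \<in> shortRM m"
  shows "ketL m x (symdiff c (ones m t)) = (if x = t then complex_of_real (1 / sqrt (2 ^ m)) else 0)"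
proof -
  have "symdiff (symdiff c (ones m t)) (ones m x) = symdiff c (ones m (t \<noteq> x))"
    by (simp add: symdiff_assoc symdiff_ones_ones)
  then show ?thesis
    using assms by (auto simp: ketL_def ones_def[symmetric] symdiff_in_shortRM_iff ones_in_shortRM_iff
        symdiff_ones_subset shortRM_subset_qubits)
qed

lemma ketL_eq_0:
  assumes "y \<notin> (\<lambda>c. symdiff c (ones m x)) ` shortRM m"
  shows "ketL m x y = 0"
proof -
  have "symdiff y (ones m x) \<notin> shortRM m"
    using assms by (metis image_eqI symdiff_cancel_right)
  then show ?thesis by (simp add: ketL_def ones_def)
qed

lemma symdiff_ones_eq_iff:
  assumes "m \<ge> 2" "c \<in> shortRM m" "d \<in> shortRM m"
  shows "symdiff c (ones m s) = symdiff d (ones m t) \<longleftrightarrow> s = t \<and> c = d"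
proof
  assume eq: "symdiff c (ones m s) = symdiff d (ones m t)"
  have "symdiff c d = symdiff (ones m s) (ones m t)"
    using eq unfolding set_eq_iff symdiff_iff by blast
  then have "ones m (s \<noteq> t) \<in> shortRM m"
    using symdiff_in_shortRM[OF assms(2,3)] by (simp add: symdiff_ones_ones)
  then have "s = t" using ones_in_shortRM_iff[OF assms(1)] by simp
  with eq show "s = t \<and> c = d" by simp
qed simp

lemma inj_on_symdiff_ones:
  assumes "m \<ge> 2"
  shows "inj_on (\<lambda>(t, c). symdiff c (ones m t)) (UNIV \<times> shortRM m)"
  using symdiff_ones_eq_iff[OF assms] by (auto simp: inj_on_def)

lemma sum_sqnorm_reindex_le:
  assumes "inj_on h D" "h ` D \<subseteq> Pow (qubits m)"
  shows "(\<Sum>d\<in>D. (cmod (f (h d)))\<^sup>2) \<le> sqnorm m f"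
proof -
  have "(\<Sum>d\<in>D. (cmod (f (h d)))\<^sup>2) = (\<Sum>y\<in>h ` D. (cmod (f y))\<^sup>2)"
    using assms(1) by (simp add: sum.reindex)
  also have "\<dots> \<le> sqnorm m f"
    unfolding sqnorm_def using assms(2) by (intro sum_mono2) auto
  finally show ?thesis .
qed

lemma sqnorm_eq_sum_reindex:
  assumes "inj_on h D" "h ` D \<subseteq> Pow (qubits m)" "\<And>y. y \<subseteq> qubits m \<Longrightarrow> y \<notin> h ` D \<Longrightarrow> f y = 0"
  shows "sqnorm m f = (\<Sum>d\<in>D. (cmod (f (h d)))\<^sup>2)"
proof -
  have "sqnorm m f = (\<Sum>y\<in>h ` D. (cmod (f y))\<^sup>2)"
    unfolding sqnorm_def using assms(2,3) by (intro sum.mono_neutral_right) auto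
  also have "\<dots> = (\<Sum>d\<in>D. (cmod (f (h d)))\<^sup>2)"
    using assms(1) by (simp add: sum.reindex)
  finally show ?thesis .
qed

lemma sum_shortRM_cosets:
  "(\<Sum>(t, c)\<in>UNIV \<times> shortRM m. h t / 2 ^ m) = h False + (h True :: real)"
  by (simp add: sum.cartesian_product[symmetric] UNIV_bool card_shortRM)

lemma logical_state_symdiff_ones:
  assumes "m \<ge> 2" "c \<in> shortRM m"
  shows "logical_state m \<alpha> \<beta> (symdiff c (ones m t))
    = (if t then \<beta> else \<alpha>) / complex_of_real (sqrt (2 ^ m))"
  using assms by (simp add: logical_state_def ketL_symdiff_ones)

lemma sqnorm_logical_state:
  assumes "m \<ge> 2"
  shows "sqnorm m (logical_state m \<alpha> \<beta>) = (cmod \<alpha>)\<^sup>2 + (cmod \<beta>)\<^sup>2"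
proof -
  let ?h = "\<lambda>(t, c). symdiff c (ones m t)"
  have "?h ` (UNIV \<times> shortRM m) \<subseteq> Pow (qubits m)"
    by (auto dest: symdiff_ones_subset[OF shortRM_subset_qubits])
  moreover have "logical_state m \<alpha> \<beta> y = 0" if "y \<notin> ?h ` (UNIV \<times> shortRM m)" for y
  proof -
    have "y \<notin> (\<lambda>c. symdiff c (ones m x)) ` shortRM m" for x
      using that by force
    then show ?thesis by (simp add: logical_state_def ketL_eq_0)
  qed
  ultimately have "sqnorm m (logical_state m \<alpha> \<beta>)
      = (\<Sum>(t, c)\<in>UNIV \<times> shortRM m. (cmod (if t then \<beta> else \<alpha>))\<^sup>2 / 2 ^ m)"
    using inj_on_symdiff_ones[OF assms] assms
    by (subst sqnorm_eq_sum_reindex) (auto intro!: sum.cong simp: logical_state_symdiff_ones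
        norm_mult norm_divide power_mult_distrib power_divide)
  then show ?thesis by (simp add: sum_shortRM_cosets)
qed

lemma pass_proj_rotated_logical_state:
  assumes "m \<ge> 2" "c\<^sub>0 \<in> shortRM m"
  shows "pass_proj m (transversal_Rz m \<theta> (logical_state m \<alpha> \<beta>)) (symdiff c\<^sub>0 (ones m t))
    = (if t then \<beta> else \<alpha>) * (\<Sum>c\<in>shortRM m. rz_phase m \<theta> (symdiff c (ones m t)))
        / complex_of_real (sqrt (2 ^ m)) / 2 ^ m"
proof -
  let ?\<psi> = "transversal_Rz m \<theta> (logical_state m \<alpha> \<beta>)"
  have "symdiff (symdiff c\<^sub>0 (ones m t)) c = symdiff (symdiff c\<^sub>0 c) (ones m t)" for c
    by (metis symdiff_assoc symdiff_commute)
  then have "pass_proj m ?\<psi> (symdiff c\<^sub>0 (ones m t)) = (\<Sum>c\<in>shortRM m. ?\<psi> (symdiff c (ones m t))) / 2 ^ m"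
    using sum_symdiff_closed[OF symdiff_in_shortRM assms(2), of "\<lambda>c. ?\<psi> (symdiff c (ones m t))"]
    by (simp add: pass_proj_def Xop_def)
  also have "\<dots> = (if t then \<beta> else \<alpha>) * (\<Sum>c\<in>shortRM m. rz_phase m \<theta> (symdiff c (ones m t)))
      / complex_of_real (sqrt (2 ^ m)) / 2 ^ m"
    using assms(1)
    by (simp add: transversal_Rz_apply logical_state_symdiff_ones sum_distrib_left
        sum_divide_distrib mult_ac)
  finally show ?thesis .
qed

lemma norm_pass_proj_rotated_logical_state_ge:
  assumes "m \<ge> 2" "c \<in> shortRM m"
  shows "cmod (if t then \<beta> else \<alpha>) / sqrt (2 ^ m) * (1 - 1 / 2 ^ (m - 1))
    \<le> cmod (pass_proj m (transversal_Rz m \<theta> (logical_state m \<alpha> \<beta>)) (symdiff c (ones m t)))"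
proof -
  define S where "S = (\<Sum>c\<in>shortRM m. rz_phase m \<theta> (symdiff c (ones m t)))"
  have "2 ^ m * (1 - 1 / 2 ^ (m - 1)) = real (card (shortRM m)) - 2"
    using assms(1) by (simp add: card_shortRM right_diff_distrib power_diff)
  then have "2 ^ m * (1 - 1 / 2 ^ (m - 1)) \<le> cmod S"
    using norm_sum_rz_phase_shortRM_ge[of m \<theta> t] by (simp add: S_def)
  then have r: "1 - 1 / 2 ^ (m - 1) \<le> cmod S / 2 ^ m"
    by (simp add: field_simps)
  have P: "cmod (pass_proj m (transversal_Rz m \<theta> (logical_state m \<alpha> \<beta>)) (symdiff c (ones m t)))
      = cmod (if t then \<beta> else \<alpha>) / sqrt (2 ^ m) * (cmod S / 2 ^ m)"
    by (simp add: pass_proj_rotated_logical_state[OF assms] S_def norm_mult norm_divide norm_power)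
  show ?thesis
    unfolding P using r by (intro mult_left_mono) simp_all
qed

lemma sqnorm_pass_proj_rotated_logical_state_ge:
  assumes "m \<ge> 2" "(cmod \<alpha>)\<^sup>2 + (cmod \<beta>)\<^sup>2 = 1"
  shows "(1 - 1 / 2 ^ (m - 1))\<^sup>2 \<le> sqnorm m (pass_proj m (transversal_Rz m \<theta> (logical_state m \<alpha> \<beta>)))"
    (is "?r\<^sup>2 \<le> sqnorm m ?P")
proof -
  let ?h = "\<lambda>(t, c). symdiff c (ones m t)"
  let ?\<gamma> = "\<lambda>t. if t then \<beta> else \<alpha>"
  have "(cmod (?\<gamma> t))\<^sup>2 * ?r\<^sup>2 / 2 ^ m \<le> (cmod (?P (?h (t, c))))\<^sup>2" if "c \<in> shortRM m" for t c
  proof -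
    have "(cmod (?\<gamma> t) / sqrt (2 ^ m) * ?r)\<^sup>2 \<le> (cmod (?P (?h (t, c))))\<^sup>2"
      using norm_pass_proj_rotated_logical_state_ge[OF assms(1) that] by (intro power_mono) auto
    then show ?thesis by (simp add: power_mult_distrib power_divide)
  qed
  then have "(\<Sum>(t, c)\<in>UNIV \<times> shortRM m. (cmod (?\<gamma> t))\<^sup>2 * ?r\<^sup>2 / 2 ^ m)
      \<le> (\<Sum>tc\<in>UNIV \<times> shortRM m. (cmod (?P (?h tc)))\<^sup>2)"
    by (intro sum_mono) auto
  also have "\<dots> \<le> sqnorm m ?P"
    using inj_on_symdiff_ones[OF assms(1)]
    by (intro sum_sqnorm_reindex_le) (auto dest: symdiff_ones_subset[OF shortRM_subset_qubits])
  finally show ?thesis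
    using assms(2) sum_shortRM_cosets[where h="\<lambda>t. (cmod (?\<gamma> t))\<^sup>2 * ?r\<^sup>2"]
    by (simp add: distrib_right[symmetric])
qed

theorem lemma2:
  fixes m :: nat and \<phi> :: real and \<alpha> \<beta> :: complex and g :: "nat \<Rightarrow> nat set"
  assumes "m \<ge> 3"
    and "(cmod \<alpha>)\<^sup>2 + (cmod \<beta>)\<^sup>2 = 1"
    and "is_basis m g"
  shows "fail_prob m g (transversal_Rz m (- \<phi>) (logical_state m \<alpha> \<beta>))
           \<le> 1 - (1 - 1 / 2 ^ (m - 1)) ^ m"
proof -
  let ?\<psi> = "transversal_Rz m (- \<phi>) (logical_state m \<alpha> \<beta>)"
  let ?r = "1 - 1 / 2 ^ (m - 1) :: real"
  have "m \<ge> 2" using assms(1) by simp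
  have "\<And>j. j < m \<Longrightarrow> g j \<subseteq> qubits m"
    using assms(3) by (simp add: is_basis_def shortRM_subset_qubits)
  then have "fail_prob m g ?\<psi> = sqnorm m ?\<psi> - sqnorm m (seq_proj g 0 (replicate m False) ?\<psi>)"
    by (rule fail_prob_eq)
  also have "\<dots> \<le> 1 - ?r\<^sup>2"
    using sqnorm_logical_state[OF \<open>m \<ge> 2\<close>] assms(2)
      sqnorm_pass_proj_rotated_logical_state_ge[OF \<open>m \<ge> 2\<close> assms(2)]
    by (simp add: seq_proj_all_pass[OF assms(3)])
  also have "\<dots> \<le> 1 - ?r ^ m"
    using \<open>m \<ge> 2\<close> by (simp add: power_decreasing)
  finally show ?thesis .
qed

end
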